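(* Let $\{\Gamma_\sigma\}_{\sigma\in[0,S]},\{\hat\Gamma_\sigma\}_{\sigma\in[0,S]}\subseteq\mathcal R^{0,1}_\eta$ be two families parametrized by arc length. Let $f\in L^2(\Omega;\mathbb R^2)$, $g\in L^2(\partial_S\Omega;\mathbb R^2)$, $w\in H^1(\Omega\setminus\Gamma_0;\mathbb R^2)$ (supported in $\{\mathrm{dist}(x,\partial\Omega)\le\eta\}$), and $\mathbb C$ an admissible elasticity tensor. Let $s\in(0,S)$ and assume $\Gamma_\sigma=\hat\Gamma_\sigma$ for all $\sigma\le s$. Then $$\frac{d\mathcal E(\Gamma_\sigma)}{d\sigma}\Big|_{\sigma=s}=\frac{d\mathcal E(\hat\Gamma_\sigma)}{d\sigma}\Big|_{\sigma=s}.$$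
   Context: Let $\Omega\subset\mathbb R^2$ be a bounded connected open set with Lipschitz boundary and fix $\eta>0$. $\mathcal R^0_\eta$ is the class of closed sets $\Gamma\subseteq\overline\Omega$ such that: (a) $\Gamma$ is a union of finitely many arcs of $C^{1,1}$ curves, each meeting $\partial\Omega$ in at most one endpoint; (b) $\mathcal H^1(\Gamma\cap\Omega)>0$ and $\Omega\setminus\Gamma$ is a connected open set which is a finite union of Lipschitz domains; (c) for every $x\in\Gamma$ there are open balls $B^1,B^2$ of radius $\eta$ with $\overline{B^1}\cap\overline{B^2}=\{x\}$ and $(B^1\cup B^2)\cap\Gamma=\emptyset$. $\mathcal R^{0,1}_\eta$ is the set of $\Gamma\in\mathcal R^0_\eta$ consisting of a single $C^{1,1}$ arc meeting $\partial\Omega$ in exactly one endpoint; $\Gamma_0$ is a fixed initial crack. A family $\{\Gamma_\sigma\}\subseteq\mathcal R^{0,1}_\eta$ is parametrized by arc length if $\Gamma_\sigma=\{\gamma(\tau):0\le\tau\le\sigma\}$ for a fixed injective $C^{1,1}$ arc-length map $\gamma$ with $\gamma(0)\in\partial\Omega$. Elasticity: $\partial_D\Omega$ is a nonempty relatively open subset of $\partial\Omega$ with finitely many components; $\partial_S\Omega$ relatively open with $\partial_S\Omega\Subset\partial\Omega\setminus\overline{\partial_D\Omega}$. Admissible elasticity tensor: $\mathbb C(x)A=\lambda(x)\mathrm{tr}(A)\mathbf I+2\mu(x)A$, $\lambda,\mu\in C^{0,1}(\overline\Omega)$, $\mu>0$, $\lambda+\mu>0$. $\mathrm Ev=\frac12(\nabla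 v+\nabla v^T)$. $\mathcal E(\Gamma)=\mathcal E(f,g,w,\mathbb C;\Gamma)$ is the minimum of $\frac12\int_{\Omega\setminus\Gamma}\mathbb C\mathrm Ev:\mathrm Ev-\int_{\Omega\setminus\Gamma}f\cdot v-\int_{\partial_S\Omega}g\cdot v\,d\mathcal H^1$ over $v\in H^1(\Omega\setminus\Gamma;\mathbb R^2)$ with $v=w$ on $\partial_D\Omega$; the map $\sigma\mapsto\mathcal E(\Gamma_\sigma)$ is differentiable. *)

theory Defs
  imports "HOL-Analysis.Analysis"
begin

type_synonym pt = "real^2"

definition hausdorff1_outer :: "pt set \<Rightarrow> ennreal" where
  "hausdorff1_outer A =
     (SUP \<delta>\<in>{0<..}. INF C\<in>{C::nat \<Rightarrow> pt set. A \<subseteq> (\<Union>i. C i) \<and>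
          (\<forall>i. bounded (C i) \<and> diameter (C i) \<le> \<delta>)}. (\<Sum>i. ennreal (diameter (C i))))"

definition hausdorff1 :: "pt measure" where
  "hausdorff1 = measure_of UNIV (sets borel) hausdorff1_outer"

definition lipschitz_domain :: "pt set \<Rightarrow> bool" where
  "lipschitz_domain U \<longleftrightarrow> open U \<and> bounded U \<and> connected U \<and> U \<noteq> {} \<and>
    (\<forall>x\<in>frontier U. \<exists>e1 e2 a b \<phi> L.
        norm e1 = 1 \<and> norm e2 = 1 \<and> e1 \<bullet> e2 = 0 \<and> a > 0 \<and> b > 0 \<and>
        L-lipschitz_on {-a<..<a} \<phi> \<and> \<phi> 0 = 0 \<and> (\<forall>t\<in>{-a<..<a}. \<bar>\<phi> t\<bar> < b) \<and>
        U \<inter> {x + t *\<^sub>R e1 + s *\<^sub>R e2 | t s. \<bar>t\<bar> < a \<and> \<bar>s\<bar> < b}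
          = {x + t *\<^sub>R e1 + s *\<^sub>R e2 | t s. \<bar>t\<bar> < a \<and> \<bar>s\<bar> < b \<and> s < \<phi> t})"

definition c11_param :: "(real \<Rightarrow> pt) \<Rightarrow> real \<Rightarrow> real \<Rightarrow> bool" where
  "c11_param c a b \<longleftrightarrow> a < b \<and> inj_on c {a..b} \<and>
    (\<exists>c' L. (\<forall>t\<in>{a..b}. (c has_vector_derivative c' t) (at t within {a..b}) \<and> c' t \<noteq> 0) \<and>
            L-lipschitz_on {a..b} c')"

definition R0 :: "pt set \<Rightarrow> real \<Rightarrow> pt set \<Rightarrow> bool" where
  "R0 \<Omega> \<eta> \<Gamma> \<longleftrightarrow> closed \<Gamma> \<and> \<Gamma> \<subseteq> closure \<Omega> \<and>
    (\<exists>P::((real \<Rightarrow> pt) \<times> real \<times> real) set. finite P \<and>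
        \<Gamma> = (\<Union>(c,a,b)\<in>P. c ` {a..b}) \<and>
        (\<forall>(c,a,b)\<in>P. c11_param c a b \<and>
            (c ` {a..b} \<inter> frontier \<Omega> \<subseteq> {c a} \<or> c ` {a..b} \<inter> frontier \<Omega> \<subseteq> {c b}))) \<and>
    hausdorff1_outer (\<Gamma> \<inter> \<Omega>) > 0 \<and>
    open (\<Omega> - \<Gamma>) \<and> connected (\<Omega> - \<Gamma>) \<and>
    (\<exists>F. finite F \<and> (\<forall>U\<in>F. lipschitz_domain U) \<and> \<Union>F = \<Omega> - \<Gamma>) \<and>
    (\<forall>x\<in>\<Gamma>. \<exists>y1 y2. cball y1 \<eta> \<inter> cball y2 \<eta> = {x} \<and> (ball y1 \<eta> \<union> ball y2 \<eta>) \<inter> \<Gamma> = {})"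

definition R01 :: "pt set \<Rightarrow> real \<Rightarrow> pt set \<Rightarrow> bool" where
  "R01 \<Omega> \<eta> \<Gamma> \<longleftrightarrow> R0 \<Omega> \<eta> \<Gamma> \<and>
    (\<exists>c a b. c11_param c a b \<and> \<Gamma> = c ` {a..b} \<and>
        (\<Gamma> \<inter> frontier \<Omega> = {c a} \<or> \<Gamma> \<inter> frontier \<Omega> = {c b}))"

definition arclen_family :: "pt set \<Rightarrow> real \<Rightarrow> (real \<Rightarrow> pt set) \<Rightarrow> bool" where
  "arclen_family \<Omega> S \<Gamma> \<longleftrightarrow> (\<exists>\<gamma> \<gamma>' L. inj_on \<gamma> {0..S} \<and> \<gamma> 0 \<in> frontier \<Omega> \<and>
     (\<forall>t\<in>{0..S}. (\<gamma> has_vector_derivative \<gamma>' t) (at t within {0..S}) \<and> norm (\<gamma>' t) = 1) \<and>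
     L-lipschitz_on {0..S} \<gamma>' \<and>
     (\<forall>\<sigma>\<in>{0..S}. \<Gamma> \<sigma> = \<gamma> ` {0..\<sigma>}))"

definition boundary_parts :: "pt set \<Rightarrow> pt set \<Rightarrow> pt set \<Rightarrow> bool" where
  "boundary_parts \<Omega> \<Gamma>D \<Gamma>S \<longleftrightarrow>
     \<Gamma>D \<noteq> {} \<and> openin (top_of_set (frontier \<Omega>)) \<Gamma>D \<and> finite (components \<Gamma>D) \<and>
     openin (top_of_set (frontier \<Omega>)) \<Gamma>S \<and> compact (closure \<Gamma>S) \<and>
     closure \<Gamma>S \<subseteq> frontier \<Omega> - closure \<Gamma>D"

definition admissible_tensor :: "pt set \<Rightarrow> (pt \<Rightarrow> real) \<Rightarrow> (pt \<Rightarrow> real) \<Rightarrow> bool" where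
  "admissible_tensor \<Omega> lam mu \<longleftrightarrow>
     (\<exists>L. L-lipschitz_on (closure \<Omega>) lam) \<and> (\<exists>L. L-lipschitz_on (closure \<Omega>) mu) \<and>
     (\<forall>x\<in>closure \<Omega>. mu x > 0 \<and> lam x + mu x > 0)"

definition elast :: "(pt \<Rightarrow> real) \<Rightarrow> (pt \<Rightarrow> real) \<Rightarrow> pt \<Rightarrow> real^2^2 \<Rightarrow> real^2^2" where
  "elast lam mu x A = (lam x * trace A) *\<^sub>R mat 1 + (2 * mu x) *\<^sub>R A"

definition sym_part :: "real^2^2 \<Rightarrow> real^2^2" where
  "sym_part A = (1/2) *\<^sub>R (A + transpose A)"

definition test_fun :: "pt set \<Rightarrow> (pt \<Rightarrow> real) \<Rightarrow> (pt \<Rightarrow> pt \<Rightarrow> real) \<Rightarrow> bool" where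
  "test_fun U \<phi> D\<phi> \<longleftrightarrow> (\<forall>x. (\<phi> has_derivative D\<phi> x) (at x)) \<and>
     (\<forall>j. continuous_on UNIV (\<lambda>x. D\<phi> x (axis j 1))) \<and>
     compact (closure {x. \<phi> x \<noteq> 0}) \<and> closure {x. \<phi> x \<noteq> 0} \<subseteq> U"

text \<open>\<open>v \<in> H^1(U;\<real>^2)\<close> with weak gradient G, \<open>G x $ i $ j = \<partial>_j v_i\<close>.\<close>
definition H1 :: "pt set \<Rightarrow> (pt \<Rightarrow> real^2) \<Rightarrow> (pt \<Rightarrow> real^2^2) \<Rightarrow> bool" where
  "H1 U v G \<longleftrightarrow> v \<in> borel_measurable lebesgue \<and> G \<in> borel_measurable lebesgue \<and>
     set_integrable lebesgue U (\<lambda>x. (norm (v x))\<^sup>2) \<and>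
     set_integrable lebesgue U (\<lambda>x. (norm (G x))\<^sup>2) \<and>
     (\<forall>\<phi> D\<phi>. test_fun U \<phi> D\<phi> \<longrightarrow> (\<forall>i j.
        (LINT x:U|lebesgue. v x $ i * D\<phi> x (axis j 1)) = - (LINT x:U|lebesgue. G x $ i $ j * \<phi> x)))"

text \<open>Boundary trace via averages over \<open>B(x,r) \<inter> U\<close>.\<close>
definition bavg :: "pt set \<Rightarrow> (pt \<Rightarrow> real^2) \<Rightarrow> pt \<Rightarrow> real \<Rightarrow> real^2" where
  "bavg U v x r = (1 / measure lebesgue (ball x r \<inter> U)) *\<^sub>R (LINT y:ball x r \<inter> U|lebesgue. v y)"

definition has_trace :: "pt set \<Rightarrow> (pt \<Rightarrow> real^2) \<Rightarrow> pt \<Rightarrow> real^2 \<Rightarrow> bool" where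
  "has_trace U v x t \<longleftrightarrow> (bavg U v x \<longlongrightarrow> t) (at_right 0)"

definition bdry_trace :: "pt set \<Rightarrow> (pt \<Rightarrow> real^2) \<Rightarrow> pt \<Rightarrow> real^2" where
  "bdry_trace U v x = Lim (at_right 0) (bavg U v x)"

definition admissible_disp ::
  "pt set \<Rightarrow> pt set \<Rightarrow> pt set \<Rightarrow> (pt \<Rightarrow> real^2) \<Rightarrow> pt set \<Rightarrow> (pt \<Rightarrow> real^2) \<Rightarrow> (pt \<Rightarrow> real^2^2) \<Rightarrow> bool" where
  "admissible_disp \<Omega> \<Gamma>D \<Gamma>0 w \<Gamma> v G \<longleftrightarrow> H1 (\<Omega> - \<Gamma>) v G \<and>
     (AE x in hausdorff1. x \<in> \<Gamma>D \<longrightarrow> (\<exists>t. has_trace (\<Omega> - \<Gamma>) v x t \<and> has_trace (\<Omega> - \<Gamma>0) w x t))"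

definition energy_functional ::
  "pt set \<Rightarrow> pt set \<Rightarrow> (pt \<Rightarrow> real) \<Rightarrow> (pt \<Rightarrow> real) \<Rightarrow> (pt \<Rightarrow> real^2) \<Rightarrow> (pt \<Rightarrow> real^2)
    \<Rightarrow> pt set \<Rightarrow> (pt \<Rightarrow> real^2) \<Rightarrow> (pt \<Rightarrow> real^2^2) \<Rightarrow> real" where
  "energy_functional \<Omega> \<Gamma>S lam mu f g \<Gamma> v G =
     (1/2) * (LINT x:\<Omega> - \<Gamma>|lebesgue. elast lam mu x (sym_part (G x)) \<bullet> sym_part (G x))
     - (LINT x:\<Omega> - \<Gamma>|lebesgue. f x \<bullet> v x)
     - (LINT x:\<Gamma>S|hausdorff1. g x \<bullet> bdry_trace (\<Omega> - \<Gamma>) v x)"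

text \<open>\<open>\<E>(f,g,w,\<bbbC>;\<Gamma>)\<close>: the minimum (written as infimum) of the energy over admissible displacements.\<close>
definition energy ::
  "pt set \<Rightarrow> pt set \<Rightarrow> pt set \<Rightarrow> (pt \<Rightarrow> real) \<Rightarrow> (pt \<Rightarrow> real) \<Rightarrow> (pt \<Rightarrow> real^2) \<Rightarrow> (pt \<Rightarrow> real^2)
    \<Rightarrow> pt set \<Rightarrow> (pt \<Rightarrow> real^2) \<Rightarrow> pt set \<Rightarrow> real" where
  "energy \<Omega> \<Gamma>D \<Gamma>S lam mu f g \<Gamma>0 w \<Gamma> =
     Inf {energy_functional \<Omega> \<Gamma>S lam mu f g \<Gamma> v G | v G. admissible_disp \<Omega> \<Gamma>D \<Gamma>0 w \<Gamma> v G}"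

end

theory Submission
  imports Defs
begin

text \<open>The energy depends on the crack only through the set \<open>\<Gamma>\<^sub>\<sigma>\<close>, so the two energy curves
  coincide on \<open>[0,s]\<close>. A derivative at an interior point is already determined by the
  one-sided limit of difference quotients from the left, hence both derivatives agree.\<close>

lemma deriv_eq_if_eq_on_left:
  fixes f g :: "real \<Rightarrow> real"
  assumes f: "f differentiable at x" and g: "g differentiable at x"
    and "a < x" and eq: "\<And>t. t \<in> {a..x} \<Longrightarrow> f t = g t"
  shows "deriv f x = deriv g x"
proof -
  have f_left: "(f has_real_derivative deriv f x) (at x within {a..x})"
    using f by (simp add: DERIV_deriv_iff_real_differentiable has_field_derivative_at_within)
  have g_left: "(g has_real_derivative deriv g x) (at x within {a..x})"
    using g by (simp add: DERIV_deriv_iff_real_differentiable has_field_derivative_at_within)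
  have g_left': "(g has_real_derivative deriv f x) (at x within {a..x})"
  proof (rule has_field_derivative_transform_within[OF f_left])
    show "0 < x - a" "x \<in> {a..x}" using \<open>a < x\<close> by auto
  qed (use eq in auto)
  moreover have "at x within {a..x} \<noteq> bot"
    using \<open>a < x\<close> by (simp add: at_within_Icc_at_left)
  ultimately show ?thesis
    using g_left by (metis has_field_derivative_unique)
qed

theorem theorem3p6:
  fixes \<Omega> \<Gamma>D \<Gamma>S \<Gamma>0 :: "pt set" and \<eta> S s :: real
    and \<Gamma> \<Gamma>h :: "real \<Rightarrow> pt set"
    and f g w :: "pt \<Rightarrow> real^2" and lam mu :: "pt \<Rightarrow> real"
  assumes \<Omega>: "lipschitz_domain \<Omega>" and \<eta>: "\<eta> > 0"
    and bd: "boundary_parts \<Omega> \<Gamma>D \<Gamma>S"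
    and C: "admissible_tensor \<Omega> lam mu"
    and \<Gamma>0: "R01 \<Omega> \<eta> \<Gamma>0"
    and fam1: "arclen_family \<Omega> S \<Gamma>" "\<forall>\<sigma>\<in>{0<..S}. R01 \<Omega> \<eta> (\<Gamma> \<sigma>)"
    and fam2: "arclen_family \<Omega> S \<Gamma>h" "\<forall>\<sigma>\<in>{0<..S}. R01 \<Omega> \<eta> (\<Gamma>h \<sigma>)"
    and f: "f \<in> borel_measurable lebesgue" "set_integrable lebesgue \<Omega> (\<lambda>x. (norm (f x))\<^sup>2)"
    and g: "g \<in> borel_measurable hausdorff1" "set_integrable hausdorff1 \<Gamma>S (\<lambda>x. (norm (g x))\<^sup>2)"
    and w: "\<exists>Gw. H1 (\<Omega> - \<Gamma>0) w Gw"
           "AE x in lebesgue. infdist x (frontier \<Omega>) > \<eta> \<longrightarrow> w x = 0"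
    and diff1: "\<forall>\<sigma>\<in>{0<..<S}. (\<lambda>\<sigma>. energy \<Omega> \<Gamma>D \<Gamma>S lam mu f g \<Gamma>0 w (\<Gamma> \<sigma>)) differentiable (at \<sigma>)"
    and diff2: "\<forall>\<sigma>\<in>{0<..<S}. (\<lambda>\<sigma>. energy \<Omega> \<Gamma>D \<Gamma>S lam mu f g \<Gamma>0 w (\<Gamma>h \<sigma>)) differentiable (at \<sigma>)"
    and s: "s \<in> {0<..<S}"
    and eq: "\<forall>\<sigma>\<in>{0..s}. \<Gamma> \<sigma> = \<Gamma>h \<sigma>"
  shows "deriv (\<lambda>\<sigma>. energy \<Omega> \<Gamma>D \<Gamma>S lam mu f g \<Gamma>0 w (\<Gamma> \<sigma>)) s
       = deriv (\<lambda>\<sigma>. energy \<Omega> \<Gamma>D \<Gamma>S lam mu f g \<Gamma>0 w (\<Gamma>h \<sigma>)) s"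
proof (rule deriv_eq_if_eq_on_left)
  show "(\<lambda>\<sigma>. energy \<Omega> \<Gamma>D \<Gamma>S lam mu f g \<Gamma>0 w (\<Gamma> \<sigma>)) differentiable at s"
    using diff1 s by blast
  show "(\<lambda>\<sigma>. energy \<Omega> \<Gamma>D \<Gamma>S lam mu f g \<Gamma>0 w (\<Gamma>h \<sigma>)) differentiable at s"
    using diff2 s by blast
  show "0 < s" using s by simp
qed (use eq in simp)

end
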